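(* Let $\mathbf{R}^{\mathrm{o}}$ be a finite set of obligations, $\mathbf{R}=(\emptyset,\mathbf{R}^{\mathrm{o}})$, fix a set $\Gamma$ of alethic formulas relative to which the overriding relation $\triangleright$ is computed, and let $M$ be a replete $\mathbf{R}$-ordered model. For every Boolean formula $a$ and world $w$ of $M$: if $w\models a$ and $w\models\bigvee_{H\in\mathit{maxf}(\mathbf{R}^{\mathrm{o}}_{\triangleright},a,\{a\})}\bigl(\bigwedge\mathrm{m}(H)\bigr)$, then $w\in\max_{\succeq_I}(\Vert a\Vert)$, with $out_4^{+}$ as the underlying I/O operation.
   Context: Boolean formulas over propositional letters; $\models_{\mathrm{PL}}$ classical entailment, $\models_{\mathrm{S5}}$ S5 entailment. An obligation is $\bigcirc(B/A)$ ($A,B$ Boolean) with body $b=A$, head $h=B$. Overriding: $r_j\triangleright r_i$ iff (i) $\{h(r_i),h(r_j)\}\cup\Gamma\models_{\mathrm{S5}}\bot$; (ii) $b(r_j)\models_{\mathrm{PL}}b(r_i)$ and $b(r_i)\not\models_{\mathrm{PL}}b(r_j)$; (iii) $\{h(r_i),b(r_j)\}\not\models_{\mathrm{PL}}\bot$. An $\mathbf{R}$-ordered model (no normality conditionals) is $(W,\succeq_N,\succeq_I,v)$ with $W\neq\emptyset$, valuation $v$, $\succeq_N=W\times W$, and $w_1\succeq_I w_2$ iff $V(w_1)\subseteq V(w_2)$, where $V(w)=\{r_i\in\mathbf{R}^{\mathrm{o}}:w\models b(r_i)\wedge\neg h(r_i)$ and $w\not\models b(r_j)$ for all $r_j\in\mathbf{R}^{\mathrm{o}}$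 with $r_j\triangleright r_i\}$. $\max_{\succeq_I}(X)=\{w\in X:\forall u\in X(u\succeq_I w\Rightarrow w\succeq_I u)\}$, $\Vert a\Vert$ the set of worlds where $a$ holds. Replete: every PL-consistent Boolean formula holds at some world. I/O: for a set $H$ of pairs of Boolean formulas, $\mathrm{m}(H)=\{a\rightarrow x:(a,x)\in H\}$ ($\bigwedge\mathrm{m}(\emptyset)=\top$), $out_4^{+}(H,a)=\{x:\{a\}\cup\mathrm{m}(H)\models_{\mathrm{PL}}x\}$; $\mathit{maxf}(N,a,C)$ is the set of $\subseteq$-maximal $H\subseteq N$ with $out_4^{+}(H,a)\cup C$ PL-consistent. Translation: for $r_i=\bigcirc(x/a)$, $D(r_i)=\{r_j\in\mathbf{R}^{\mathrm{o}}:r_j\triangleright r_i\}$, $r_i^{\triangleright}=(a\wedge\bigwedge_{r_j\in D(r_i)}\neg b(r_j),x)$ if $D(r_i)\neq\emptyset$, else $(a,x)$; $\mathbf{R}^{\mathrm{o}}_{\triangleright}=\{r^{\triangleright}:r\in\mathbf{R}^{\mathrm{o}}\}$. *)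

theory Defs
  imports Main
begin

datatype 'p bfm = BAtom 'p | BTop | BBot | BNeg "'p bfm" | BConj "'p bfm" "'p bfm"
  | BDisj "'p bfm" "'p bfm" | BImp "'p bfm" "'p bfm"

datatype 'p mfm = MAtom 'p | MTop | MBot | MNeg "'p mfm" | MConj "'p mfm" "'p mfm"
  | MDisj "'p mfm" "'p mfm" | MImp "'p mfm" "'p mfm" | MBox "'p mfm"

fun emb :: "'p bfm \<Rightarrow> 'p mfm" where
  "emb (BAtom p) = MAtom p"
| "emb BTop = MTop"
| "emb BBot = MBot"
| "emb (BNeg a) = MNeg (emb a)"
| "emb (BConj a b) = MConj (emb a) (emb b)"
| "emb (BDisj a b) = MDisj (emb a) (emb b)"
| "emb (BImp a b) = MImp (emb a) (emb b)"

fun bigconj :: "'p bfm list \<Rightarrow> 'p bfm" where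
  "bigconj [] = BTop"
| "bigconj [x] = x"
| "bigconj (x # xs) = BConj x (bigconj xs)"

fun beval :: "('p \<Rightarrow> bool) \<Rightarrow> 'p bfm \<Rightarrow> bool" where
  "beval v (BAtom p) = v p"
| "beval v BTop = True"
| "beval v BBot = False"
| "beval v (BNeg a) = (\<not> beval v a)"
| "beval v (BConj a b) = (beval v a \<and> beval v b)"
| "beval v (BDisj a b) = (beval v a \<or> beval v b)"
| "beval v (BImp a b) = (beval v a \<longrightarrow> beval v b)"

definition pl_entails :: "'p bfm set \<Rightarrow> 'p bfm \<Rightarrow> bool" where
  "pl_entails S x \<longleftrightarrow> (\<forall>v. (\<forall>y\<in>S. beval v y) \<longrightarrow> beval v x)"

definition pl_consistent :: "'p bfm set \<Rightarrow> bool" where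
  "pl_consistent S \<longleftrightarrow> \<not> pl_entails S BBot"

fun msat :: "('p \<Rightarrow> bool) set \<Rightarrow> ('p \<Rightarrow> bool) \<Rightarrow> 'p mfm \<Rightarrow> bool" where
  "msat W w (MAtom p) = w p"
| "msat W w MTop = True"
| "msat W w MBot = False"
| "msat W w (MNeg a) = (\<not> msat W w a)"
| "msat W w (MConj a b) = (msat W w a \<and> msat W w b)"
| "msat W w (MDisj a b) = (msat W w a \<or> msat W w b)"
| "msat W w (MImp a b) = (msat W w a \<longrightarrow> msat W w b)"
| "msat W w (MBox a) = (\<forall>u\<in>W. msat W u a)"

definition s5_entails :: "'p mfm set \<Rightarrow> 'p mfm \<Rightarrow> bool" where
  "s5_entails S x \<longleftrightarrow> (\<forall>W w. w \<in> W \<longrightarrow> (\<forall>y\<in>S. msat W w y) \<longrightarrow> msat W w x)"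

text \<open>An obligation O(B/A) is represented as the pair (A, B) = (body, head).\<close>
type_synonym 'p obl = "'p bfm \<times> 'p bfm"

abbreviation body :: "'p obl \<Rightarrow> 'p bfm" where "body r \<equiv> fst r"
abbreviation head :: "'p obl \<Rightarrow> 'p bfm" where "head r \<equiv> snd r"

text \<open>overrides Gamma rj ri  means  rj overrides ri (relative to Gamma).\<close>
definition overrides :: "'p mfm set \<Rightarrow> 'p obl \<Rightarrow> 'p obl \<Rightarrow> bool" where
  "overrides \<Gamma> rj ri \<longleftrightarrow>
     s5_entails ({emb (head ri), emb (head rj)} \<union> \<Gamma>) MBot
   \<and> pl_entails {body rj} (body ri) \<and> \<not> pl_entails {body ri} (body rj)
   \<and> \<not> pl_entails {head ri, body rj} BBot"

text \<open>A model is given by a set of worlds W and a valuation v; the orderings are determined.\<close>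
definition wsat :: "('w \<Rightarrow> 'p \<Rightarrow> bool) \<Rightarrow> 'w \<Rightarrow> 'p bfm \<Rightarrow> bool" where
  "wsat v w a \<longleftrightarrow> beval (v w) a"

definition Viol :: "'p mfm set \<Rightarrow> 'p obl set \<Rightarrow> ('w \<Rightarrow> 'p \<Rightarrow> bool) \<Rightarrow> 'w \<Rightarrow> 'p obl set" where
  "Viol \<Gamma> Ro v w = {ri \<in> Ro. wsat v w (body ri) \<and> \<not> wsat v w (head ri)
      \<and> (\<forall>rj\<in>Ro. overrides \<Gamma> rj ri \<longrightarrow> \<not> wsat v w (body rj))}"

definition ge_N :: "'w set \<Rightarrow> ('w \<times> 'w) set" where
  "ge_N W = W \<times> W"

definition ge_I :: "'p mfm set \<Rightarrow> 'p obl set \<Rightarrow> 'w set \<Rightarrow> ('w \<Rightarrow> 'p \<Rightarrow> bool) \<Rightarrow> ('w \<times> 'w) set" where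
  "ge_I \<Gamma> Ro W v = {(w1, w2). w1 \<in> W \<and> w2 \<in> W \<and> Viol \<Gamma> Ro v w1 \<subseteq> Viol \<Gamma> Ro v w2}"

definition max_rel :: "('w \<times> 'w) set \<Rightarrow> 'w set \<Rightarrow> 'w set" where
  "max_rel R X = {w \<in> X. \<forall>u\<in>X. (u, w) \<in> R \<longrightarrow> (w, u) \<in> R}"

definition ext :: "'w set \<Rightarrow> ('w \<Rightarrow> 'p \<Rightarrow> bool) \<Rightarrow> 'p bfm \<Rightarrow> 'w set" where
  "ext W v a = {w \<in> W. wsat v w a}"

definition replete :: "'w set \<Rightarrow> ('w \<Rightarrow> 'p \<Rightarrow> bool) \<Rightarrow> bool" where
  "replete W v \<longleftrightarrow> (\<forall>a. pl_consistent {a} \<longrightarrow> (\<exists>w\<in>W. wsat v w a))"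

definition mat :: "'p obl set \<Rightarrow> 'p bfm set" where
  "mat H = {BImp a x | a x. (a, x) \<in> H}"

definition out4p :: "'p obl set \<Rightarrow> 'p bfm \<Rightarrow> 'p bfm set" where
  "out4p H a = {x. pl_entails ({a} \<union> mat H) x}"

definition maxf :: "'p obl set \<Rightarrow> 'p bfm \<Rightarrow> 'p bfm set \<Rightarrow> 'p obl set set" where
  "maxf N a C = {H. H \<subseteq> N \<and> pl_consistent (out4p H a \<union> C)
      \<and> (\<forall>H'. H \<subset> H' \<and> H' \<subseteq> N \<longrightarrow> \<not> pl_consistent (out4p H' a \<union> C))}"

definition Dset :: "'p mfm set \<Rightarrow> 'p obl set \<Rightarrow> 'p obl \<Rightarrow> 'p obl set" where
  "Dset \<Gamma> Ro ri = {rj \<in> Ro. overrides \<Gamma> rj ri}"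

text \<open>The big conjunction over the (finite) set D is formed along some enumeration of D;
  its meaning does not depend on the enumeration chosen.\<close>
definition trans_obl :: "'p mfm set \<Rightarrow> 'p obl set \<Rightarrow> 'p obl \<Rightarrow> 'p obl" where
  "trans_obl \<Gamma> Ro r =
     (if Dset \<Gamma> Ro r \<noteq> {}
      then (BConj (body r)
              (bigconj (map (\<lambda>rj. BNeg (body rj)) (SOME xs. set xs = Dset \<Gamma> Ro r \<and> distinct xs))),
            head r)
      else r)"

definition trans_set :: "'p mfm set \<Rightarrow> 'p obl set \<Rightarrow> 'p obl set" where
  "trans_set \<Gamma> Ro = trans_obl \<Gamma> Ro ` Ro"

end

theory Submission
  imports Defs
begin

text \<open>Let u satisfy a and lie below w, i.e. every violation at u is one at w. A norm r is
  violated at a world exactly when its translation is violated there as a material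
  implication. So u violates no member of H (otherwise w would, but w satisfies m(H)); thus
  u satisfies a and m(H). By maximality of H, adding any further translated norm to H makes
  a inconsistent with the output, so u violates every translated norm outside H, in
  particular the translation of each norm violated at w.\<close>

definition violates :: "('p \<Rightarrow> bool) \<Rightarrow> 'p obl \<Rightarrow> bool" where
  "violates s r \<longleftrightarrow> beval s (body r) \<and> \<not> beval s (head r)"

lemma beval_bigconj: "beval s (bigconj xs) \<longleftrightarrow> (\<forall>x\<in>set xs. beval s x)"
  by (induction xs rule: bigconj.induct) auto

lemma beval_mat_iff: "(\<forall>\<phi>\<in>mat H. beval s \<phi>) \<longleftrightarrow> (\<forall>r\<in>H. \<not> violates s r)"
  by (force simp: mat_def violates_def)

lemma pl_consistent_out4p:
  assumes "beval s a" and "\<forall>\<phi>\<in>mat H. beval s \<phi>" and "\<forall>c\<in>C. beval s c"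
  shows "pl_consistent (out4p H a \<union> C)"
  using assms by (auto simp: pl_consistent_def pl_entails_def out4p_def)

lemma maxf_violates_excluded:
  assumes H: "H \<in> maxf N a C" and r: "r \<in> N" "r \<notin> H"
    and s: "beval s a" "\<forall>\<phi>\<in>mat H. beval s \<phi>" "\<forall>c\<in>C. beval s c"
  shows "violates s r"
proof (rule ccontr)
  assume "\<not> violates s r"
  with s(2) have "\<forall>\<phi>\<in>mat (insert r H). beval s \<phi>"
    by (simp add: beval_mat_iff)
  then have "pl_consistent (out4p (insert r H) a \<union> C)"
    using pl_consistent_out4p s(1,3) by blast
  moreover have "H \<subset> insert r H" "insert r H \<subseteq> N"
    using H r by (auto simp: maxf_def)
  ultimately show False
    using H by (auto simp: maxf_def)
qed

lemma beval_body_trans_obl: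
  assumes "finite Ro"
  shows "beval s (body (trans_obl \<Gamma> Ro r)) \<longleftrightarrow>
     beval s (body r) \<and> (\<forall>rj\<in>Dset \<Gamma> Ro r. \<not> beval s (body rj))"
proof -
  have "\<exists>xs. set xs = Dset \<Gamma> Ro r \<and> distinct xs"
    using assms by (intro finite_distinct_list) (simp add: Dset_def)
  then have "set (SOME xs. set xs = Dset \<Gamma> Ro r \<and> distinct xs) = Dset \<Gamma> Ro r"
    by (rule someI_ex[THEN conjunct1])
  then show ?thesis
    by (auto simp: trans_obl_def beval_bigconj)
qed

lemma head_trans_obl [simp]: "head (trans_obl \<Gamma> Ro r) = head r"
  by (simp add: trans_obl_def)

lemma Viol_iff_violates_trans_obl:
  assumes "finite Ro" and "r \<in> Ro"
  shows "r \<in> Viol \<Gamma> Ro v u \<longleftrightarrow> violates (v u) (trans_obl \<Gamma> Ro r)"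
  using assms
  by (auto simp: Viol_def wsat_def violates_def beval_body_trans_obl Dset_def)

lemma Viol_subset_maxf_model:
  assumes Ro: "finite Ro"
    and H: "H \<in> maxf (trans_set \<Gamma> Ro) a {a}"
    and w: "\<forall>\<phi>\<in>mat H. wsat v w \<phi>"
    and u: "wsat v u a" "Viol \<Gamma> Ro v u \<subseteq> Viol \<Gamma> Ro v w"
  shows "Viol \<Gamma> Ro v w \<subseteq> Viol \<Gamma> Ro v u"
proof
  have w_H: "\<forall>t\<in>H. \<not> violates (v w) t"
    using w by (simp add: wsat_def beval_mat_iff)
  have u_H: "\<not> violates (v u) t" if "t \<in> H" for t
  proof
    assume t_u: "violates (v u) t"
    obtain k where k: "k \<in> Ro" "t = trans_obl \<Gamma> Ro k"
      using H \<open>t \<in> H\<close> by (auto simp: maxf_def trans_set_def)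
    have "k \<in> Viol \<Gamma> Ro v u"
      using t_u k by (simp add: Viol_iff_violates_trans_obl[OF Ro])
    with u(2) have "k \<in> Viol \<Gamma> Ro v w" by blast
    with k have "violates (v w) t"
      by (simp add: Viol_iff_violates_trans_obl[OF Ro])
    with w_H \<open>t \<in> H\<close> show False by blast
  qed
  fix r
  assume r: "r \<in> Viol \<Gamma> Ro v w"
  then have "r \<in> Ro" by (simp add: Viol_def)
  let ?t = "trans_obl \<Gamma> Ro r"
  have "violates (v w) ?t"
    using r \<open>r \<in> Ro\<close> by (simp add: Viol_iff_violates_trans_obl[OF Ro])
  with w_H have "?t \<notin> H" by blast
  moreover have "?t \<in> trans_set \<Gamma> Ro"
    using \<open>r \<in> Ro\<close> by (simp add: trans_set_def)
  moreover have "\<forall>\<phi>\<in>mat H. beval (v u) \<phi>"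
    using u_H by (simp add: beval_mat_iff)
  ultimately have "violates (v u) ?t"
    using maxf_violates_excluded[OF H] u(1) by (simp add: wsat_def)
  with \<open>r \<in> Ro\<close> show "r \<in> Viol \<Gamma> Ro v u"
    by (simp add: Viol_iff_violates_trans_obl[OF Ro])
qed

theorem theorem1:
  fixes Ro :: "'p obl set"
    and \<Gamma> :: "'p mfm set"
    and W :: "'w set"
    and v :: "'w \<Rightarrow> 'p \<Rightarrow> bool"
    and a :: "'p bfm"
    and w :: 'w
  assumes "finite Ro"
    and "W \<noteq> {}"
    and "replete W v"
    and "w \<in> W"
    and "wsat v w a"
    and "\<exists>H \<in> maxf (trans_set \<Gamma> Ro) a {a}. \<forall>\<phi> \<in> mat H. wsat v w \<phi>"
  shows "w \<in> max_rel (ge_I \<Gamma> Ro W v) (ext W v a)"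
proof -
  obtain H where H: "H \<in> maxf (trans_set \<Gamma> Ro) a {a}" and w_H: "\<forall>\<phi> \<in> mat H. wsat v w \<phi>"
    using assms(6) by blast
  have "(w, u) \<in> ge_I \<Gamma> Ro W v"
    if "u \<in> ext W v a" and "(u, w) \<in> ge_I \<Gamma> Ro W v" for u
    using that Viol_subset_maxf_model[OF assms(1) H w_H] assms(4)
    by (simp add: ext_def ge_I_def)
  moreover have "w \<in> ext W v a"
    using assms(4,5) by (simp add: ext_def)
  ultimately show ?thesis
    by (simp add: max_rel_def)
qed

end
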